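(* Let $p$ be a prime and let $a,b\in\mathbb{C}_p$ with $a\neq0$, $b\neq0$, $a\neq b$ and $|a|_p<|b|_p$. Let $P=-\frac1b$, $D=\mathbb{C}_p\setminus\{P\}$, $f(x)=\frac{ax^2}{bx+1}$ on $D$, $x_1=0$, $x_2=\frac{1}{a-b}$. For $n\geq0$ put $r_n=\frac{|b|_p^{n-1}}{|a|_p^{n}}$, and put $l_0=0$, $l_{n+1}=\frac{|a|_p^{n}}{|b|_p^{n+1}}$. Define $\Omega=\{x\in D:\ x^{(i)}=P\text{ for some } i\ge1\}$, $\Psi=\{x\in D\setminus\{x_2\}:\ x^{(j)}=x_2\text{ for some } j\ge1\}$, $\Sigma=\{x\in D\setminus\{x_1,x_2\}:\ x^{(k)}=x\text{ for some }k\ge 2\}$. Then $$\Omega\cup\Psi\cup\Sigma\subset\bigcup_{i=1}^{\infty}S_{r_i}(x_1)\cup\bigcup_{j=0}^{\infty}S_{l_j}(P).$$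
   Context: $\mathbb{C}_p$ is the field of complex $p$-adic numbers with $p$-adic norm $|\cdot|_p$. For $c\in\mathbb{C}_p$ and $r\ge0$, $S_r(c)=\{x\in\mathbb{C}_p:|x-c|_p=r\}$. For $x\in D$, $x^{(n)}=f^n(x)$ denotes the $n$-th iterate of $f$ at $x$ (defined as long as no earlier iterate equals $P$). *)

theory Defs
  imports "HOL-Computational_Algebra.Polynomial"
begin

text \<open>C_p is characterised (up to isometric isomorphism) as a field K with an
 absolute value nv that is non-archimedean, normalised by |p| = 1/p (hence restricts
 to the p-adic absolute value on Q), complete, algebraically closed, and in which the
 algebraic closure of Q is dense.\<close>

definition is_Cp :: "nat \<Rightarrow> ('a::field \<Rightarrow> real) \<Rightarrow> bool" where
  "is_Cp p nv \<longleftrightarrow>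
     prime p \<and>
     (\<forall>x. 0 \<le> nv x) \<and> (\<forall>x. nv x = 0 \<longleftrightarrow> x = 0) \<and>
     (\<forall>x y. nv (x * y) = nv x * nv y) \<and>
     (\<forall>x y. nv (x + y) \<le> max (nv x) (nv y)) \<and>
     nv (of_nat p) = 1 / real p \<and>
     (\<forall>X :: nat \<Rightarrow> 'a. (\<forall>e>0. \<exists>N. \<forall>m\<ge>N. \<forall>n\<ge>N. nv (X m - X n) < e)
         \<longrightarrow> (\<exists>L. \<forall>e>0. \<exists>N. \<forall>n\<ge>N. nv (X n - L) < e)) \<and>
     (\<forall>q :: 'a poly. 0 < degree q \<longrightarrow> (\<exists>x. poly q x = 0)) \<and>
     (\<forall>x e. 0 < e \<longrightarrow> (\<exists>y. (\<exists>q :: int poly. q \<noteq> 0 \<and> poly (map_poly of_int q) y = 0)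
                                 \<and> nv (x - y) < e))"

definition sphere_nv :: "('a::field \<Rightarrow> real) \<Rightarrow> real \<Rightarrow> 'a \<Rightarrow> 'a set" where
  "sphere_nv nv r c = {x. nv (x - c) = r}"

definition iter_defined :: "('a \<Rightarrow> 'a) \<Rightarrow> 'a \<Rightarrow> nat \<Rightarrow> 'a \<Rightarrow> bool" where
  "iter_defined f P n x \<longleftrightarrow> (\<forall>m<n. (f ^^ m) x \<noteq> P)"

fun lseq :: "real \<Rightarrow> real \<Rightarrow> nat \<Rightarrow> real" where
  "lseq na nb 0 = 0"
| "lseq na nb (Suc n) = na ^ n / nb ^ (Suc n)"

definition rseq :: "real \<Rightarrow> real \<Rightarrow> nat \<Rightarrow> real" where
  "rseq na nb n = nb powi (int n - 1) / na ^ n"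

end

(*
  Put q = |a|/|b| < 1 and \<rho> = 1/|b|, so that |P| = |x2| = \<rho>.  On the punctured disc
  0 < |x| < \<rho> the ultrametric inequality gives |f x| = |a| |x|^2 < |x|: the disc is
  forward invariant and the norm strictly decreases along orbits in it.  An orbit that
  enters it therefore never meets P or x2 afterwards and is not periodic.
  Outside the disc, |x| > \<rho> gives |f x| = q |x|, so the orbit falls into the disc
  unless it lands exactly on |y| = \<rho>, i.e. unless |x| = \<rho>/q^n = r_n.  For |x| = \<rho>
  one has |f x| = q \<rho>^2/|x - P|, which equals \<rho>/q^n = r_n (n \<ge> 0) exactly when
  |x - P| = l_(n+2); the radii l_0 = 0 and l_1 = \<rho> exclude x = P and x = 0.  Hence
  every point off all the spheres eventually enters the disc.
*)
theory Submission
  imports Defs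
begin

lemma rseq_eq:
  assumes "0 < na" "0 < nb"
  shows "rseq na nb n = (1 / nb) / (na / nb) ^ n"
  using assms by (simp add: rseq_def power_int_diff power_divide)

lemma funpow_fixpoint: "f x = x \<Longrightarrow> (f ^^ n) x = x"
  by (induction n) simp_all

locale nonarchimedean_absolute_value =
  fixes nv :: "'a::field \<Rightarrow> real"
  assumes nv_nonneg: "\<And>x. 0 \<le> nv x"
    and nv_eq_0_iff: "\<And>x. nv x = 0 \<longleftrightarrow> x = 0"
    and nv_mult: "\<And>x y. nv (x * y) = nv x * nv y"
    and nv_add_le_max: "\<And>x y. nv (x + y) \<le> max (nv x) (nv y)"
begin

lemma nv_zero: "nv 0 = 0"
  using nv_eq_0_iff by simp

lemma nv_pos_iff: "0 < nv x \<longleftrightarrow> x \<noteq> 0"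
  using nv_nonneg[of x] nv_eq_0_iff[of x] by linarith

lemma nv_one: "nv 1 = 1"
  using nv_mult[of 1 1] nv_eq_0_iff[of 1] by simp

lemma nv_minus: "nv (- x) = nv x"
proof -
  have "nv (-1) * nv (-1) = 1"
    using nv_mult[of "-1" "-1"] nv_one by simp
  then have "nv (-1) = 1"
    using nv_nonneg[of "-1"] power2_eq_1_iff[of "nv (-1)"] by (auto simp: power2_eq_square)
  then show ?thesis
    using nv_mult[of "-1" x] by simp
qed

lemma nv_divide: "nv (x / y) = nv x / nv y"
proof (cases "y = 0")
  case False
  then have "nv (x / y) * nv y = nv x"
    using nv_mult[of "x / y" y] by simp
  with False show ?thesis
    using nv_eq_0_iff[of y] by (simp add: eq_divide_eq)
qed (simp add: nv_zero)

lemma nv_power: "nv (x ^ n) = nv x ^ n"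
  by (induction n) (simp_all add: nv_one nv_mult)

lemma nv_diff_le_max: "nv (x - y) \<le> max (nv x) (nv y)"
  using nv_add_le_max[of x "- y"] by (simp add: nv_minus)

lemma nv_add_eq_max:
  assumes "nv x \<noteq> nv y"
  shows "nv (x + y) = max (nv x) (nv y)"
proof -
  have "nv x \<le> max (nv (x + y)) (nv y)" "nv y \<le> max (nv (x + y)) (nv x)"
    using nv_add_le_max[of "x + y" "- y"] nv_add_le_max[of "x + y" "- x"]
    by (simp_all add: nv_minus)
  with assms nv_add_le_max[of x y] show ?thesis
    by linarith
qed

lemma nv_diff_eq_max: "nv x \<noteq> nv y \<Longrightarrow> nv (x - y) = max (nv x) (nv y)"
  using nv_add_eq_max[of x "- y"] by (simp add: nv_minus)

end

locale quadratic_rational_map = nonarchimedean_absolute_value nv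
  for nv :: "'a::field \<Rightarrow> real" +
  fixes a b :: 'a
  assumes a_nonzero: "a \<noteq> 0"
    and nv_a_less: "nv a < nv b"
begin

definition qmap :: "'a \<Rightarrow> 'a" where
  "qmap x = a * x ^ 2 / (b * x + 1)"

definition pole :: 'a where
  "pole = - 1 / b"

definition fixpt :: 'a where
  "fixpt = 1 / (a - b)"

definition punctured_disc :: "'a set" where
  "punctured_disc = {y. 0 < nv y \<and> nv y < 1 / nv b}"

lemma nv_a_pos: "0 < nv a"
  using a_nonzero by (simp add: nv_pos_iff)

lemma nv_b_pos: "0 < nv b"
  using nv_a_pos nv_a_less by linarith

lemma b_nonzero: "b \<noteq> 0"
  using nv_b_pos nv_zero by auto

lemma nv_pole: "nv pole = 1 / nv b"
  by (simp add: pole_def nv_divide nv_minus nv_one)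

lemma nv_fixpt: "nv fixpt = 1 / nv b"
  using nv_diff_eq_max[of a b] nv_a_less by (simp add: fixpt_def nv_divide nv_one)

text \<open>In the paper the orbit of \<open>P\<close> is undefined; in HOL, \<open>x / 0 = 0\<close> sends \<open>P\<close> to the
  fixed point \<open>0\<close>, which is how orbits through the pole are handled below.\<close>
lemma qmap_pole: "qmap pole = 0"
  by (simp add: qmap_def pole_def b_nonzero)

lemma qmap_zero: "qmap 0 = 0"
  by (simp add: qmap_def)

lemma qmap_fixpt: "qmap fixpt = fixpt"
proof -
  have "a - b \<noteq> 0"
    using nv_a_less by auto
  then have "b * fixpt + 1 = a * fixpt" "fixpt \<noteq> 0"
    by (simp_all add: fixpt_def field_simps)
  then show ?thesis
    by (simp add: qmap_def a_nonzero power2_eq_square)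
qed

lemma nv_qmap: "nv (qmap x) = nv a * nv x ^ 2 / (nv b * nv (x - pole))"
proof -
  have "b * x + 1 = b * (x - pole)"
    by (simp add: pole_def b_nonzero field_simps)
  then show ?thesis
    by (simp add: qmap_def nv_divide nv_mult nv_power)
qed

lemma nv_qmap_inside:
  assumes "nv x < 1 / nv b"
  shows "nv (qmap x) = nv a * nv x ^ 2"
  using assms nv_diff_eq_max[of x pole] nv_b_pos by (simp add: nv_qmap nv_pole)

lemma nv_qmap_outside:
  assumes "1 / nv b < nv x"
  shows "nv (qmap x) = nv a / nv b * nv x"
proof -
  have "0 < nv x"
    using assms nv_b_pos by (smt (verit) divide_pos_pos)
  with assms nv_diff_eq_max[of x pole] show ?thesis
    by (simp add: nv_qmap nv_pole power2_eq_square)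
qed

lemma qmap_punctured_disc:
  assumes "y \<in> punctured_disc"
  shows "qmap y \<in> punctured_disc \<and> nv (qmap y) < nv y"
proof -
  have y: "0 < nv y" "nv y < 1 / nv b"
    using assms by (simp_all add: punctured_disc_def)
  have "nv a * nv y < nv b * (1 / nv b)"
    using y nv_a_less nv_a_pos by (intro mult_strict_mono) auto
  then have "nv a * nv y * nv y < nv y"
    using y(1) nv_b_pos by simp
  moreover have "nv (qmap y) = nv a * nv y * nv y"
    using y(2) by (simp add: nv_qmap_inside power2_eq_square)
  ultimately have "0 < nv (qmap y)" "nv (qmap y) < nv y"
    using y(1) nv_a_pos by simp_all
  with y show ?thesis
    unfolding punctured_disc_def by auto
qed

lemma funpow_qmap_punctured_disc:
  "y \<in> punctured_disc \<Longrightarrow> (qmap ^^ n) y \<in> punctured_disc"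
  by (induction n) (simp_all add: qmap_punctured_disc)

lemma nv_funpow_qmap_less:
  assumes "y \<in> punctured_disc" and "0 < n"
  shows "nv ((qmap ^^ n) y) < nv y"
  using assms(2)
proof (induction n)
  case (Suc n)
  have "nv ((qmap ^^ Suc n) y) < nv ((qmap ^^ n) y)"
    using qmap_punctured_disc funpow_qmap_punctured_disc assms(1) by simp
  moreover have "nv ((qmap ^^ n) y) \<le> nv y"
    using Suc.IH by (cases n) auto
  ultimately show ?case
    by linarith
qed simp

lemma nv_funpow_qmap_outside:
  "(\<forall>m<n. 1 / nv b < nv ((qmap ^^ m) x)) \<Longrightarrow> nv ((qmap ^^ n) x) = (nv a / nv b) ^ n * nv x"
proof (induction n)
  case (Suc n)
  have "1 / nv b < nv ((qmap ^^ n) x)"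
    using Suc.prems lessI by blast
  moreover have "nv ((qmap ^^ n) x) = (nv a / nv b) ^ n * nv x"
    using Suc by simp
  ultimately show ?case
    by (simp add: nv_qmap_outside)
qed simp

lemma orbit_enters_punctured_disc_from_outside:
  assumes outside: "1 / nv b < nv x"
    and off_spheres: "\<forall>i\<ge>1. nv x \<noteq> rseq (nv a) (nv b) i"
  shows "\<exists>n. (qmap ^^ n) x \<in> punctured_disc"
proof -
  define q where "q = nv a / nv b"
  have q: "0 < q" "q < 1"
    using nv_a_pos nv_b_pos nv_a_less by (simp_all add: q_def)
  have x_pos: "0 < nv x"
    using outside nv_b_pos by (smt (verit) divide_pos_pos)
  obtain N where "q ^ N < (1 / nv b) / nv x"
    using real_arch_pow_inv[OF _ q(2)] x_pos nv_b_pos by (metis divide_pos_pos zero_less_one)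
  then have N: "q ^ N * nv x < 1 / nv b"
    using x_pos nv_b_pos by (simp add: field_simps)
  have "\<exists>n. nv ((qmap ^^ n) x) \<le> 1 / nv b"
  proof (rule ccontr)
    assume never: "\<nexists>n. nv ((qmap ^^ n) x) \<le> 1 / nv b"
    then have "\<forall>m<N. 1 / nv b < nv ((qmap ^^ m) x)"
      by (simp add: not_le)
    then have "nv ((qmap ^^ N) x) = q ^ N * nv x"
      using nv_funpow_qmap_outside by (simp add: q_def)
    with N never show False
      by (metis less_eq_real_def)
  qed
  then obtain n where n_le: "nv ((qmap ^^ n) x) \<le> 1 / nv b"
    and before: "\<forall>m<n. 1 / nv b < nv ((qmap ^^ m) x)"
    by (auto simp: exists_least_iff[of "\<lambda>n. nv ((qmap ^^ n) x) \<le> 1 / nv b"] not_le)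
  have eq: "nv ((qmap ^^ n) x) = q ^ n * nv x"
    using nv_funpow_qmap_outside[OF before] by (simp add: q_def)
  have "n \<noteq> 0"
    using n_le outside by (metis funpow_0 not_le)
  then have "nv x \<noteq> (1 / nv b) / q ^ n"
    using off_spheres rseq_eq[OF nv_a_pos nv_b_pos] by (simp add: q_def)
  then have "nv ((qmap ^^ n) x) \<noteq> 1 / nv b"
    using eq q(1) nv_b_pos by (auto simp: field_simps)
  with n_le eq q(1) x_pos have "(qmap ^^ n) x \<in> punctured_disc"
    by (simp add: punctured_disc_def)
  then show ?thesis ..
qed

lemma orbit_enters_punctured_disc_from_sphere:
  assumes on_sphere: "nv x = 1 / nv b"
    and off_spheres: "\<forall>m. nv (x - pole) \<noteq> lseq (nv a) (nv b) m"
  shows "\<exists>n. (qmap ^^ n) x \<in> punctured_disc"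
proof -
  define q where "q = nv a / nv b"
  define u where "u = nv (x - pole)"
  have "u \<noteq> 0" "u \<noteq> 1 / nv b"
    using off_spheres[rule_format, of 0] off_spheres[rule_format, of 1] by (simp_all add: u_def)
  moreover have "u \<le> 1 / nv b"
    using nv_diff_le_max[of x pole] on_sphere by (simp add: u_def nv_pole)
  ultimately have u: "0 < u" "u < 1 / nv b"
    using nv_nonneg[of "x - pole"] by (simp_all add: u_def)
  have fx: "nv (qmap x) = q * (1 / nv b) ^ 2 / u"
    using on_sphere nv_b_pos by (simp add: nv_qmap u_def q_def power2_eq_square)
  have off: "nv (qmap x) \<noteq> rseq (nv a) (nv b) i" for i
  proof
    assume "nv (qmap x) = rseq (nv a) (nv b) i"
    then have "u = (1 / nv b) * q ^ Suc i"
      using fx u nv_a_pos nv_b_pos by (auto simp: rseq_eq q_def field_simps power2_eq_square)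
    then show False
      using off_spheres[rule_format, of "Suc (Suc i)"] by (simp add: q_def u_def power_divide)
  qed
  have "0 < nv (qmap x)"
    using fx u nv_a_pos nv_b_pos by (simp add: q_def)
  moreover have "nv (qmap x) \<noteq> 1 / nv b"
    using off[of 0] nv_a_pos nv_b_pos by (simp add: rseq_eq)
  ultimately consider "qmap x \<in> punctured_disc" | "1 / nv b < nv (qmap x)"
    unfolding punctured_disc_def by fastforce
  then show ?thesis
  proof cases
    case 1
    then have "(qmap ^^ 1) x \<in> punctured_disc"
      by simp
    then show ?thesis ..
  next
    case 2
    then obtain n where "(qmap ^^ n) (qmap x) \<in> punctured_disc"
      using orbit_enters_punctured_disc_from_outside off by blast
    then have "(qmap ^^ Suc n) x \<in> punctured_disc"
      by (simp add: funpow_swap1)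
    then show ?thesis ..
  qed
qed

lemma orbit_enters_punctured_disc:
  assumes "\<forall>i\<ge>1. nv x \<noteq> rseq (nv a) (nv b) i"
    and "\<forall>m. nv (x - pole) \<noteq> lseq (nv a) (nv b) m"
  shows "\<exists>n. (qmap ^^ n) x \<in> punctured_disc"
proof -
  have "nv x \<noteq> 0"
    using assms(2)[rule_format, of 1] by (auto simp: nv_eq_0_iff nv_minus nv_pole)
  then consider "x \<in> punctured_disc" | "nv x = 1 / nv b" | "1 / nv b < nv x"
    using nv_nonneg[of x] unfolding punctured_disc_def by fastforce
  then show ?thesis
  proof cases
    case 1
    then have "(qmap ^^ 0) x \<in> punctured_disc"
      by simp
    then show ?thesis ..
  next
    case 2
    then show ?thesis
      using orbit_enters_punctured_disc_from_sphere assms(2) by blast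
  next
    case 3
    then show ?thesis
      using orbit_enters_punctured_disc_from_outside assms(1) by blast
  qed
qed

lemma orbit_avoids_pole_fixpt_and_cycles:
  assumes "\<forall>i\<ge>1. nv x \<noteq> rseq (nv a) (nv b) i"
    and "\<forall>m. nv (x - pole) \<noteq> lseq (nv a) (nv b) m"
  shows "(qmap ^^ i) x \<noteq> pole"
    and "(qmap ^^ j) x \<noteq> fixpt"
    and "0 < k \<Longrightarrow> (qmap ^^ k) x \<noteq> x"
proof -
  obtain n where n: "(qmap ^^ n) x \<in> punctured_disc"
    using orbit_enters_punctured_disc[OF assms] by blast
  have late: "(qmap ^^ (m + n)) x \<in> punctured_disc" for m
    using funpow_qmap_punctured_disc[OF n, of m] by (simp add: funpow_add)
  have "0 \<notin> punctured_disc" "fixpt \<notin> punctured_disc"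
    by (simp_all add: punctured_disc_def nv_zero nv_fixpt)
  show "(qmap ^^ i) x \<noteq> pole"
  proof
    assume "(qmap ^^ i) x = pole"
    then have "(qmap ^^ Suc i) x = 0"
      by (simp add: qmap_pole)
    then have "(qmap ^^ (n + Suc i)) x = 0"
      unfolding funpow_add o_apply by (simp add: funpow_fixpoint qmap_zero)
    with late[of "Suc i"] \<open>0 \<notin> punctured_disc\<close> show False
      by (simp add: add.commute)
  qed
  show "(qmap ^^ j) x \<noteq> fixpt"
  proof
    assume "(qmap ^^ j) x = fixpt"
    then have "(qmap ^^ (n + j)) x = fixpt"
      using funpow_fixpoint[of qmap fixpt] qmap_fixpt by (simp add: funpow_add)
    with late[of j] \<open>fixpt \<notin> punctured_disc\<close> show False
      by (simp add: add.commute)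
  qed
  show "(qmap ^^ k) x \<noteq> x" if "0 < k"
  proof
    assume cycle: "(qmap ^^ k) x = x"
    then have "(qmap ^^ (k * n - n + n)) x = x"
      using funpow_fixpoint[of "qmap ^^ k" x, OF cycle, of n] that by (simp add: funpow_mult)
    then have "x \<in> punctured_disc"
      using late[of "k * n - n"] by simp
    then have "nv ((qmap ^^ k) x) < nv x"
      using nv_funpow_qmap_less that by blast
    with cycle show False
      by simp
  qed
qed

end

theorem corollary3p4:
  fixes nv :: "'a::field \<Rightarrow> real" and p :: nat and a b :: 'a
  assumes Cp: "is_Cp p nv"
    and a0: "a \<noteq> 0" and b0: "b \<noteq> 0" and ab: "a \<noteq> b"
    and lt: "nv a < nv b"
  defines "P \<equiv> - 1 / b"
    and "f \<equiv> (\<lambda>x. a * x^2 / (b * x + 1))"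
    and "x1 \<equiv> 0"
    and "x2 \<equiv> 1 / (a - b)"
  defines "\<Omega> \<equiv> {x. x \<noteq> P \<and> (\<exists>i\<ge>1. iter_defined f P i x \<and> (f ^^ i) x = P)}"
    and "\<Psi> \<equiv> {x. x \<noteq> P \<and> x \<noteq> x2 \<and> (\<exists>j\<ge>1. iter_defined f P j x \<and> (f ^^ j) x = x2)}"
    and "\<Sigma> \<equiv> {x. x \<noteq> P \<and> x \<noteq> x1 \<and> x \<noteq> x2 \<and> (\<exists>k\<ge>2. iter_defined f P k x \<and> (f ^^ k) x = x)}"
  shows "\<Omega> \<union> \<Psi> \<union> \<Sigma> \<subseteq>
           (\<Union>i\<in>{1..}. sphere_nv nv (rseq (nv a) (nv b) i) x1)
         \<union> (\<Union>j. sphere_nv nv (lseq (nv a) (nv b) j) P)"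
proof -
  \<comment> \<open>The hypotheses \<open>b \<noteq> 0\<close> and \<open>a \<noteq> b\<close> are implied by \<open>nv a < nv b\<close>.\<close>
  interpret quadratic_rational_map nv a b
    using Cp a0 lt unfolding is_Cp_def by unfold_locales auto
  have "f = qmap" "P = pole" "x2 = fixpt"
    by (simp_all add: fun_eq_iff f_def qmap_def P_def pole_def x2_def fixpt_def)
  then have "x \<notin> \<Omega> \<union> \<Psi> \<union> \<Sigma>"
    if "\<forall>i\<ge>1. nv x \<noteq> rseq (nv a) (nv b) i" "\<forall>m. nv (x - pole) \<noteq> lseq (nv a) (nv b) m" for x
    using orbit_avoids_pole_fixpt_and_cycles[OF that] unfolding \<Omega>_def \<Psi>_def \<Sigma>_def by auto
  then show ?thesis
    by (fastforce simp: sphere_nv_def x1_def P_def pole_def)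
qed

end
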